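(* Let $p\in\{1,2\}$ and let $\hat\nu$ be a minimizer of $\Psi_p$ over all probability measures on $\mathbb{R}^d$ (an optimal barycenter). Then: (i) for every $j\in\{1,\dots,N\}$, $\Psi_p(\mu^j)\le\frac{1}{\lambda_j}\Psi_p(\hat\nu)$; in particular, if $\lambda_j=\max_i\lambda_i$, then $\Psi_p(\mu^j)\le N\,\Psi_p(\hat\nu)$; (ii) for the mixture $\nu\coloneqq\sum_{i=1}^N\lambda_i\mu^i$, $\Psi_p(\nu)\le2\,\Psi_p(\hat\nu)$; (iii) if $\nu$ is a random measure equal to $\mu^i$ with probability $\lambda_i$ ($i=1,\dots,N$), then $\mathbb{E}[\Psi_p(\nu)]\le2\,\Psi_p(\hat\nu)$.
   Context: $\|\cdot\|$ is the Euclidean norm on $\mathbb{R}^d$. For $1\le p<\infty$ and probability measures $\mu,\nu$ on $\mathbb{R}^d$ with finite support, $\mathcal{W}_p^p(\mu,\nu)\coloneqq\min_{\pi\in\Pi(\mu,\nu)}\int\|x-y\|^p\,d\pi(x,y)$, where $\Pi(\mu,\nu)$ is the set of couplings of $\mu$ and $\nu$. Fix $N\ge2$, weights $\lambda\in\Delta_N\coloneqq\{\lambda\in(0,1)^N:\sum_i\lambda_i=1\}$, and discrete probability measures $\mu^i=\sum_{l=1}^{n_i}\mu^i_l\delta(x^i_l)$, $i=1,\dots,N$, on $\mathbb{R}^d$ with positive weights and pairwise distinct points $x^i_1,\dots,x^i_{n_i}$ for each $i$. The barycenter objective is $\Psi_p(\nu)\coloneqq\sum_{i=1}^N\lambda_i\mathcal{W}_p^p(\nu,\mu^i)$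 for probability measures $\nu$ on $\mathbb{R}^d$; an optimal barycenter (a minimizer of $\Psi_p$) exists. *)

theory Defs
  imports "HOL-Probability.Probability"
begin

definition borel_prob :: "'a::euclidean_space measure \<Rightarrow> bool" where
  "borel_prob \<mu> \<longleftrightarrow> prob_space \<mu> \<and> sets \<mu> = sets borel"

definition couplings :: "'a::euclidean_space measure \<Rightarrow> 'a measure \<Rightarrow> ('a \<times> 'a) measure set" where
  "couplings \<mu> \<nu> = {\<pi>. prob_space \<pi> \<and> sets \<pi> = sets (borel \<Otimes>\<^sub>M borel)
      \<and> distr \<pi> borel fst = \<mu> \<and> distr \<pi> borel snd = \<nu>}"

definition wass_pp :: "real \<Rightarrow> 'a::euclidean_space measure \<Rightarrow> 'a measure \<Rightarrow> ennreal" where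
  "wass_pp p \<mu> \<nu> = (INF \<pi>\<in>couplings \<mu> \<nu>. \<integral>\<^sup>+ z. ennreal (norm (fst z - snd z) powr p) \<partial>\<pi>)"

definition Psi :: "real \<Rightarrow> nat \<Rightarrow> (nat \<Rightarrow> real) \<Rightarrow> (nat \<Rightarrow> 'a::euclidean_space measure)
    \<Rightarrow> 'a measure \<Rightarrow> ennreal" where
  "Psi p N lam mu \<nu> = (\<Sum>i<N. ennreal (lam i) * wass_pp p \<nu> (mu i))"

definition discrete_measure :: "nat \<Rightarrow> (nat \<Rightarrow> real) \<Rightarrow> (nat \<Rightarrow> 'a::euclidean_space) \<Rightarrow> 'a measure" where
  "discrete_measure n w x = measure_of UNIV (sets borel)
      (\<lambda>A. \<Sum>l<n. ennreal (w l) * indicator A (x l))"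

definition mixture :: "nat \<Rightarrow> (nat \<Rightarrow> real) \<Rightarrow> (nat \<Rightarrow> 'a::euclidean_space measure) \<Rightarrow> 'a measure" where
  "mixture N lam mu = measure_of UNIV (sets borel)
      (\<lambda>A. \<Sum>i<N. ennreal (lam i) * emeasure (mu i) A)"

end

(*
  Fix couplings pi_i of nuhat with mu^i.  Disintegrating pi_i along the atoms x^i_l of mu^i gives
  weights f_i l y, the probability that y is sent to x^i_l.  Gluing pi_j and pi_i through y, the
  matrix G(l, m) = integral of f_j l * f_i m over nuhat couples mu^j with mu^i, so W_p^p(mu^j, mu^i)
  is at most the nuhat-integral of the pointwise cost K_ji(y) between the two conditional laws.
  With D_i(y) the cost of pi_i at y, the triangle inequality gives K_ji <= D_j + D_i for p = 1,
  and for p = 2 expanding around y gives K_ji = D_j + D_i - 2 <a_j, a_i> with mean displacements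
  a_i, |a_i|^2 <= D_i.  Averaging over i (and j) with the weights lambda turns these into (i) and
  (iii); for (ii) the mixture is coupled with mu^i by mixing the glued couplings.  Optimising over
  the pi_i replaces their costs by W_p^p(nuhat, mu^i).
*)

theory Submission
  imports Defs
begin

section \<open>Finite atomic measures\<close>

definition discrete_distr :: "'i set \<Rightarrow> ('i \<Rightarrow> ennreal) \<Rightarrow> ('i \<Rightarrow> 'b::topological_space) \<Rightarrow> 'b measure"
  where "discrete_distr S g u = distr (point_measure S g) borel u"

lemma sets_discrete_distr [simp, measurable_cong]: "sets (discrete_distr S g u) = sets borel"
  by (simp add: discrete_distr_def)

lemma space_discrete_distr [simp]: "space (discrete_distr S g u) = UNIV"
  by (simp add: discrete_distr_def)

lemma discrete_distr_cong:
  assumes "S = T" "\<And>k. k \<in> T \<Longrightarrow> g k = h k" "\<And>k. k \<in> T \<Longrightarrow> u k = v k"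
  shows "discrete_distr S g u = discrete_distr T h v"
proof -
  have "point_measure S g = point_measure T h"
    unfolding point_measure_def \<open>S = T\<close> using assms(2)
    by (intro density_cong) (auto simp: AE_count_space)
  then show ?thesis
    unfolding discrete_distr_def using assms by (intro distr_cong) (auto simp: space_point_measure)
qed

lemma nn_integral_discrete_distr:
  assumes "finite S" "f \<in> borel_measurable borel"
  shows "(\<integral>\<^sup>+ z. f z \<partial>discrete_distr S g u) = (\<Sum>k\<in>S. g k * f (u k))"
  using assms by (simp add: discrete_distr_def nn_integral_distr nn_integral_point_measure_finite)

lemma emeasure_discrete_distr:
  assumes "finite S" "A \<in> sets borel"
  shows "emeasure (discrete_distr S g u) A = (\<Sum>k\<in>S. g k * indicator A (u k))"
  using nn_integral_discrete_distr[OF assms(1) borel_measurable_indicator[OF assms(2)]]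
  by (simp add: assms(2))

lemma prob_space_discrete_distr:
  assumes "finite S" "(\<Sum>k\<in>S. g k) = 1"
  shows "prob_space (discrete_distr S g u)"
  by (rule prob_spaceI) (simp add: emeasure_discrete_distr assms)

lemma distr_discrete_distr:
  assumes "f \<in> borel_measurable borel"
  shows "distr (discrete_distr S g u) borel f = discrete_distr S g (f \<circ> u)"
  using assms by (simp add: discrete_distr_def distr_distr)

lemma discrete_distr_eqI:
  assumes "finite S" "finite T"
    and "\<And>A. A \<in> sets borel \<Longrightarrow>
      (\<Sum>k\<in>S. g k * indicator A (u k)) = (\<Sum>k\<in>T. h k * indicator A (v k))"
  shows "discrete_distr S g u = discrete_distr T h v"
proof (rule measure_eqI)
  fix A assume "A \<in> sets (discrete_distr S g u)"
  then show "emeasure (discrete_distr S g u) A = emeasure (discrete_distr T h v) A"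
    using assms by (simp only: sets_discrete_distr emeasure_discrete_distr)
qed simp

lemma discrete_distr_reindex:
  assumes "bij_betw \<phi> T S" "finite S"
  shows "discrete_distr S g u = discrete_distr T (g \<circ> \<phi>) (u \<circ> \<phi>)"
proof (intro discrete_distr_eqI)
  fix A
  show "(\<Sum>k\<in>S. g k * indicator A (u k)) = (\<Sum>k\<in>T. (g \<circ> \<phi>) k * indicator A ((u \<circ> \<phi>) k))"
    using sum.reindex_bij_betw[OF assms(1), of "\<lambda>k. g k * indicator A (u k)"] by simp
qed (use assms bij_betw_finite[OF assms(1)] in auto)

lemma discrete_distr_Sigma_fst:
  assumes "finite A" "\<And>a. a \<in> A \<Longrightarrow> finite (B a)"
  shows "discrete_distr (Sigma A B) g (\<lambda>k. u (fst k)) = discrete_distr A (\<lambda>a. \<Sum>b\<in>B a. g (a, b)) u"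
proof (intro discrete_distr_eqI)
  fix U
  have "(\<Sum>k\<in>Sigma A B. g k * indicator U (u (fst k))) = (\<Sum>a\<in>A. \<Sum>b\<in>B a. g (a, b) * indicator U (u a))"
    using sum.Sigma[OF assms(1), of B "\<lambda>a b. g (a, b) * indicator U (u a)"] assms(2)
    by (simp only: split_def prod.sel) simp
  then show "(\<Sum>k\<in>Sigma A B. g k * indicator U (u (fst k))) = (\<Sum>a\<in>A. (\<Sum>b\<in>B a. g (a, b)) * indicator U (u a))"
    by (simp add: sum_distrib_right)
qed (use assms in auto)

lemma discrete_measure_eq_discrete_distr:
  "discrete_measure n w x = discrete_distr {..<n} (\<lambda>l. ennreal (w l)) x"
proof -
  have "discrete_distr {..<n} (\<lambda>l. ennreal (w l)) x = measure_of UNIV (sets borel)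
      (emeasure (discrete_distr {..<n} (\<lambda>l. ennreal (w l)) x))"
    using measure_of_of_measure[of "discrete_distr {..<n} (\<lambda>l. ennreal (w l)) x"] by simp
  also have "\<dots> = discrete_measure n w x"
    unfolding discrete_measure_def
    by (rule measure_of_eq) (auto simp: emeasure_discrete_distr sets.sigma_sets_eq[of borel, simplified])
  finally show ?thesis by simp
qed

lemma mixture_discrete_distr:
  fixes u :: "nat \<Rightarrow> 'i \<Rightarrow> 'a::euclidean_space"
  assumes "\<And>j. j < N \<Longrightarrow> finite (S j)"
  shows "mixture N lam (\<lambda>j. discrete_distr (S j) (g j) (u j))
    = discrete_distr (SIGMA j:{..<N}. S j) (\<lambda>(j, k). ennreal (lam j) * g j k) (\<lambda>(j, k). u j k)"
proof -
  let ?D = "discrete_distr (SIGMA j:{..<N}. S j) (\<lambda>(j, k). ennreal (lam j) * g j k) (\<lambda>(j, k). u j k)"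
  have "mixture N lam (\<lambda>j. discrete_distr (S j) (g j) (u j)) = measure_of UNIV (sets borel) (emeasure ?D)"
    unfolding mixture_def using assms
  proof (intro measure_of_eq)
    fix A :: "'a set" assume "A \<in> sigma_sets UNIV (sets borel)"
    then have "A \<in> sets borel" by (simp add: sets.sigma_sets_eq[of borel, simplified])
    then have "emeasure ?D A = (\<Sum>(j, k)\<in>(SIGMA j:{..<N}. S j). ennreal (lam j) * g j k * indicator A (u j k))"
    proof -
      have "finite (SIGMA j:{..<N}. S j)" using assms by auto
      from emeasure_discrete_distr[OF this \<open>A \<in> sets borel\<close>] show ?thesis
        by (simp only: split_def)
    qed
    also have "\<dots> = (\<Sum>j<N. \<Sum>k\<in>S j. ennreal (lam j) * g j k * indicator A (u j k))"
      using assms by (subst sum.Sigma) auto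
    also have "\<dots> = (\<Sum>j<N. ennreal (lam j) * emeasure (discrete_distr (S j) (g j) (u j)) A)"
      using \<open>A \<in> sets borel\<close> assms
      by (intro sum.cong refl) (simp only: emeasure_discrete_distr lessThan_iff sum_distrib_left mult.assoc)
    finally show "(\<Sum>j<N. ennreal (lam j) * emeasure (discrete_distr (S j) (g j) (u j)) A) = emeasure ?D A"
      by simp
  qed simp
  also have "\<dots> = ?D"
    using measure_of_of_measure[of ?D] by simp
  finally show ?thesis .
qed

lemma mixture_const:
  assumes "sets \<nu> = sets borel" "\<forall>j<N. 0 \<le> lam j" "(\<Sum>j<N. lam j) = 1"
  shows "mixture N lam (\<lambda>_. \<nu>) = \<nu>"
proof -
  have "(\<Sum>j<N. ennreal (lam j)) = 1"
    using assms(2,3) by (subst sum_ennreal) auto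
  then have "mixture N lam (\<lambda>_. \<nu>) = measure_of (space \<nu>) (sets \<nu>) (emeasure \<nu>)"
    unfolding mixture_def using sets_eq_imp_space_eq[OF assms(1)] assms(1)
    by (simp add: sum_distrib_right[symmetric])
  then show ?thesis using measure_of_of_measure[of \<nu>] by simp
qed

section \<open>Couplings and transport costs\<close>

lemma couplingsI:
  fixes \<gamma> :: "('a::euclidean_space \<times> 'a) measure"
  assumes "prob_space \<gamma>" "sets \<gamma> = sets borel" "distr \<gamma> borel fst = \<mu>" "distr \<gamma> borel snd = \<nu>"
  shows "\<gamma> \<in> couplings \<mu> \<nu>"
  using assms unfolding couplings_def borel_prod by simp

lemma borel_measurable_transport_cost [measurable]:
  "(\<lambda>z. ennreal (norm (fst z - snd z) powr p)) \<in> borel_measurable (borel :: ('a::euclidean_space \<times> 'a) measure)"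
  unfolding borel_prod[symmetric] by measurable

lemma wass_pp_le_cost:
  "\<gamma> \<in> couplings \<mu> \<nu> \<Longrightarrow> wass_pp p \<mu> \<nu> \<le> (\<integral>\<^sup>+ z. ennreal (norm (fst z - snd z) powr p) \<partial>\<gamma>)"
  unfolding wass_pp_def by (rule INF_lower)

lemma transport_cost_discrete_distr:
  assumes "finite S"
  shows "(\<integral>\<^sup>+ z. ennreal (norm (fst z - snd z) powr p) \<partial>discrete_distr S g (\<lambda>k. (u k, v k)))
    = (\<Sum>k\<in>S. g k * ennreal (norm (u k - v k :: 'a::euclidean_space) powr p))"
  by (subst nn_integral_discrete_distr[OF assms borel_measurable_transport_cost]) simp

lemma borel_measurable_fst_pair [measurable]: "fst \<in> borel_measurable (borel :: ('a::euclidean_space \<times> 'a) measure)"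
  and borel_measurable_snd_pair [measurable]: "snd \<in> borel_measurable (borel :: ('a::euclidean_space \<times> 'a) measure)"
  unfolding borel_prod[symmetric] by measurable

lemma distr_fst_discrete_distr:
  "distr (discrete_distr S g (\<lambda>k. (u k, v k))) borel fst = discrete_distr S g (u :: _ \<Rightarrow> 'a::euclidean_space)"
  and distr_snd_discrete_distr:
  "distr (discrete_distr S g (\<lambda>k. (u k, v k))) borel snd = discrete_distr S g (v :: _ \<Rightarrow> 'a)"
  by (simp_all add: distr_discrete_distr comp_def)

lemma discrete_distr_coupling:
  fixes u v :: "'i \<Rightarrow> 'a::euclidean_space"
  assumes "finite S" "(\<Sum>k\<in>S. g k) = 1"
  shows "discrete_distr S g (\<lambda>k. (u k, v k)) \<in> couplings (discrete_distr S g u) (discrete_distr S g v)"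
  by (rule couplingsI) (simp_all add: prob_space_discrete_distr assms distr_fst_discrete_distr distr_snd_discrete_distr)

lemma wass_pp_discrete_distr_self:
  assumes "finite S" "(\<Sum>k\<in>S. g k) = 1"
  shows "wass_pp p (discrete_distr S g u) (discrete_distr S g u) = 0"
  using wass_pp_le_cost[OF discrete_distr_coupling[OF assms, of u u], of p] assms
  by (simp add: transport_cost_discrete_distr)

lemma discrete_distr_couplingI:
  fixes u :: "'i \<Rightarrow> 'a::euclidean_space" and v :: "'j \<Rightarrow> 'a"
  assumes "finite A" "finite B"
    and rows: "\<And>a. a \<in> A \<Longrightarrow> (\<Sum>b\<in>B. G a b) = \<alpha> a"
    and cols: "\<And>b. b \<in> B \<Longrightarrow> (\<Sum>a\<in>A. G a b) = \<beta> b"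
    and "(\<Sum>a\<in>A. \<alpha> a) = 1"
  shows "discrete_distr (A \<times> B) (\<lambda>(a, b). G a b) (\<lambda>(a, b). (u a, v b))
    \<in> couplings (discrete_distr A \<alpha> u) (discrete_distr B \<beta> v)"
proof -
  let ?G = "\<lambda>(a, b). G a b"
  have "(\<Sum>k\<in>A \<times> B. ?G k) = (\<Sum>a\<in>A. \<Sum>b\<in>B. G a b)"
    by (simp add: sum.cartesian_product)
  also have "\<dots> = 1"
    using rows assms(5) by simp
  finally have "discrete_distr (A \<times> B) ?G (\<lambda>k. (u (fst k), v (snd k)))
      \<in> couplings (discrete_distr (A \<times> B) ?G (\<lambda>k. u (fst k))) (discrete_distr (A \<times> B) ?G (\<lambda>k. v (snd k)))"
    using assms by (intro discrete_distr_coupling) auto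
  moreover have "discrete_distr (A \<times> B) ?G (\<lambda>k. u (fst k)) = discrete_distr A \<alpha> u"
    using discrete_distr_Sigma_fst[of A "\<lambda>_. B" ?G u] assms by (simp add: rows cong: discrete_distr_cong)
  moreover have "discrete_distr (A \<times> B) ?G (\<lambda>k. v (snd k)) = discrete_distr B \<beta> v"
  proof -
    have "discrete_distr (A \<times> B) ?G (\<lambda>k. v (snd k)) = discrete_distr (B \<times> A) (?G \<circ> prod.swap) (\<lambda>k. v (fst k))"
    proof (subst discrete_distr_reindex[of prod.swap "B \<times> A"])
      show "bij_betw prod.swap (B \<times> A) (A \<times> B)"
        by (rule bij_betwI[of _ _ _ prod.swap]) auto
    qed (auto simp: comp_def assms)
    also have "\<dots> = discrete_distr B (\<lambda>b. \<Sum>a\<in>A. G a b) v"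
      using discrete_distr_Sigma_fst[of B "\<lambda>_. A" "?G \<circ> prod.swap" v] assms by simp
    finally show ?thesis
      using cols by (simp cong: discrete_distr_cong)
  qed
  ultimately show ?thesis by (simp add: split_def)
qed

lemma mixture_cong: "(\<And>j. j < N \<Longrightarrow> M j = M' j) \<Longrightarrow> mixture N lam M = mixture N lam M'"
  unfolding mixture_def by (intro arg_cong[where f="measure_of _ _"] ext sum.cong) auto

lemma mixture_coupling:
  fixes u v :: "nat \<Rightarrow> 'i \<Rightarrow> 'a::euclidean_space"
  assumes fin: "\<And>j. j < N \<Longrightarrow> finite (S j)" and sum1: "\<And>j. j < N \<Longrightarrow> (\<Sum>k\<in>S j. g j k) = 1"
    and fst_marg: "\<And>j. j < N \<Longrightarrow> discrete_distr (S j) (g j) (u j) = M j"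
    and snd_marg: "\<And>j. j < N \<Longrightarrow> discrete_distr (S j) (g j) (v j) = \<nu>" and "sets \<nu> = sets borel"
    and lam: "\<forall>j<N. 0 \<le> lam j" "(\<Sum>j<N. lam j) = 1"
  shows "discrete_distr (SIGMA j:{..<N}. S j) (\<lambda>(j, k). ennreal (lam j) * g j k) (\<lambda>(j, k). (u j k, v j k))
    \<in> couplings (mixture N lam M) \<nu>"
proof -
  let ?S = "SIGMA j:{..<N}. S j" and ?g = "\<lambda>(j, k). ennreal (lam j) * g j k"
  have "(\<Sum>jk\<in>?S. ?g jk) = (\<Sum>j<N. \<Sum>k\<in>S j. ennreal (lam j) * g j k)"
    using fin by (subst sum.Sigma) (auto simp: split_def)
  also have "\<dots> = (\<Sum>j<N. ennreal (lam j))"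
    using sum1 by (simp add: sum_distrib_left[symmetric])
  also have "\<dots> = 1" using lam by (subst sum_ennreal) auto
  finally have "discrete_distr ?S ?g (\<lambda>jk. (case_prod u jk, case_prod v jk))
      \<in> couplings (discrete_distr ?S ?g (case_prod u)) (discrete_distr ?S ?g (case_prod v))"
    using fin by (intro discrete_distr_coupling) auto
  moreover have "discrete_distr ?S ?g (case_prod u) = mixture N lam M"
    using mixture_discrete_distr[of N S lam g u, OF fin] mixture_cong[of N M "\<lambda>j. discrete_distr (S j) (g j) (u j)"]
      fst_marg by (simp add: split_def)
  moreover have "discrete_distr ?S ?g (case_prod v) = \<nu>"
    using mixture_discrete_distr[of N S lam g v, OF fin] mixture_cong[of N "\<lambda>_. \<nu>" "\<lambda>j. discrete_distr (S j) (g j) (v j)"]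
      snd_marg mixture_const[of \<nu> N lam] assms(5) lam by (simp add: split_def)
  ultimately show ?thesis
    by (simp add: split_def)
qed

lemma wass_pp_mixture_le:
  fixes u v :: "nat \<Rightarrow> 'i \<Rightarrow> 'a::euclidean_space"
  assumes fin: "\<And>j. j < N \<Longrightarrow> finite (S j)" and sum1: "\<And>j. j < N \<Longrightarrow> (\<Sum>k\<in>S j. g j k) = 1"
    and fst_marg: "\<And>j. j < N \<Longrightarrow> discrete_distr (S j) (g j) (u j) = M j"
    and snd_marg: "\<And>j. j < N \<Longrightarrow> discrete_distr (S j) (g j) (v j) = \<nu>" and "sets \<nu> = sets borel"
    and lam: "\<forall>j<N. 0 \<le> lam j" "(\<Sum>j<N. lam j) = 1"
  shows "wass_pp p (mixture N lam M) \<nu> \<le> (\<Sum>j<N. ennreal (lam j) *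
    (\<integral>\<^sup>+ z. ennreal (norm (fst z - snd z) powr p) \<partial>discrete_distr (S j) (g j) (\<lambda>k. (u j k, v j k))))"
proof -
  let ?S = "SIGMA j:{..<N}. S j" and ?g = "\<lambda>(j, k). ennreal (lam j) * g j k"
  have "wass_pp p (mixture N lam M) \<nu> \<le> (\<integral>\<^sup>+ z. ennreal (norm (fst z - snd z) powr p)
      \<partial>discrete_distr ?S ?g (\<lambda>(j, k). (u j k, v j k)))"
    by (rule wass_pp_le_cost[OF mixture_coupling[OF assms]])
  also have "\<dots> = (\<Sum>(j, k)\<in>?S. ennreal (lam j) * g j k * ennreal (norm (u j k - v j k) powr p))"
    using fin by (subst nn_integral_discrete_distr) (auto simp: split_def)
  also have "\<dots> = (\<Sum>j<N. ennreal (lam j) * (\<Sum>k\<in>S j. g j k * ennreal (norm (u j k - v j k) powr p)))"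
    using fin by (subst sum.Sigma[symmetric]) (auto simp: sum_distrib_left mult.assoc)
  finally show ?thesis
    using fin by (simp add: transport_cost_discrete_distr)
qed

section \<open>Disintegration of a coupling with an atomic marginal\<close>

lemma sum_indicator_inj_on:
  fixes f :: "nat \<Rightarrow> 'b::semiring_1"
  assumes "inj_on x {..<n}" "l < n"
  shows "(\<Sum>k<n. f k * indicator {x l} (x k)) = f l"
proof -
  have "(\<Sum>k<n. f k * indicator {x l} (x k)) = (\<Sum>k<n. if k = l then f l else 0)"
    using assms by (intro sum.cong refl) (auto simp: indicator_def inj_on_def)
  then show ?thesis using assms(2) by simp
qed

locale discrete_coupling =
  fixes \<nu> :: "'a::euclidean_space measure" and \<pi> :: "('a \<times> 'a) measure"
    and n :: nat and w :: "nat \<Rightarrow> ennreal" and x :: "nat \<Rightarrow> 'a"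
  assumes prob_space_\<nu>: "prob_space \<nu>" and sets_\<nu>: "sets \<nu> = sets borel"
    and coupling: "\<pi> \<in> couplings \<nu> (discrete_distr {..<n} w x)"
    and inj_x: "inj_on x {..<n}"
begin

lemma sets_\<pi>: "sets \<pi> = sets borel"
  and distr_\<pi>_fst: "distr \<pi> borel fst = \<nu>"
  and distr_\<pi>_snd: "distr \<pi> borel snd = discrete_distr {..<n} w x"
  using coupling by (auto simp: couplings_def borel_prod[symmetric])

lemma space_\<pi> [simp]: "space \<pi> = UNIV"
  using sets_eq_imp_space_eq[OF sets_\<pi>] by simp

lemma space_\<nu> [simp]: "space \<nu> = UNIV"
  using sets_eq_imp_space_eq[OF sets_\<nu>] by simp

lemma measurable_\<pi> [simp]: "measurable \<pi> M = measurable borel M"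
  by (rule measurable_cong_sets[OF sets_\<pi> refl])

lemma measurable_\<nu> [simp]: "measurable \<nu> M = measurable borel M"
  by (rule measurable_cong_sets[OF sets_\<nu> refl])

text \<open>The unnormalised conditional law of the first coordinate given that the second one is \<open>x l\<close>.\<close>

definition cond_measure :: "nat \<Rightarrow> 'a measure" where
  "cond_measure l = distr (density \<pi> (\<lambda>z. indicator {x l} (snd z))) borel fst"

definition cond_weight :: "nat \<Rightarrow> 'a \<Rightarrow> ennreal" where
  "cond_weight l = RN_deriv \<nu> (cond_measure l)"

lemma sets_cond_measure [simp]: "sets (cond_measure l) = sets borel"
  by (simp add: cond_measure_def)

lemma borel_measurable_cond_weight [measurable]: "cond_weight l \<in> borel_measurable borel"
  using borel_measurable_RN_deriv[of \<nu> "cond_measure l"] by (simp add: cond_weight_def)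

lemma nn_integral_cond_measure:
  assumes "h \<in> borel_measurable borel"
  shows "integral\<^sup>N (cond_measure l) h = (\<integral>\<^sup>+ z. indicator {x l} (snd z) * h (fst z) \<partial>\<pi>)"
  using assms unfolding cond_measure_def
  by (simp add: nn_integral_distr nn_integral_density)

lemma nn_integral_fst_coupling:
  assumes "h \<in> borel_measurable borel"
  shows "(\<integral>\<^sup>+ z. h (fst z) \<partial>\<pi>) = integral\<^sup>N \<nu> h"
proof -
  have "(\<integral>\<^sup>+ z. h (fst z) \<partial>\<pi>) = integral\<^sup>N (distr \<pi> borel fst) h"
    using assms by (intro nn_integral_distr[symmetric]) simp_all
  then show ?thesis by (simp add: distr_\<pi>_fst)
qed

lemma absolutely_continuous_cond_measure: "absolutely_continuous \<nu> (cond_measure l)"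
  unfolding absolutely_continuous_def
proof
  fix A assume "A \<in> null_sets \<nu>"
  then have A: "A \<in> sets borel" "emeasure \<nu> A = 0"
    using sets_\<nu> by auto
  have "emeasure (cond_measure l) A = (\<integral>\<^sup>+ z. indicator {x l} (snd z) * indicator A (fst z) \<partial>\<pi>)"
    using nn_integral_cond_measure[of "indicator A" l] A by (simp add: nn_integral_indicator)
  also have "\<dots> \<le> (\<integral>\<^sup>+ z. indicator A (fst z) \<partial>\<pi>)"
    by (intro nn_integral_mono) (simp add: indicator_def)
  also have "\<dots> = emeasure \<nu> A"
    using A by (simp add: nn_integral_fst_coupling sets_\<nu>)
  finally show "A \<in> null_sets (cond_measure l)"
    using A by (intro null_setsI) (auto simp: cond_measure_def)
qed

lemma nn_integral_cond_weight_mult: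
  assumes "h \<in> borel_measurable borel"
  shows "(\<integral>\<^sup>+ y. cond_weight l y * h y \<partial>\<nu>) = (\<integral>\<^sup>+ z. indicator {x l} (snd z) * h (fst z) \<partial>\<pi>)"
proof -
  interpret prob_space \<nu> by (rule prob_space_\<nu>)
  have "sets (cond_measure l) = sets \<nu>"
    by (simp add: sets_\<nu>)
  then have "(\<integral>\<^sup>+ y. cond_weight l y * h y \<partial>\<nu>) = integral\<^sup>N (cond_measure l) h"
    unfolding cond_weight_def using assms
    by (intro RN_deriv_nn_integral[OF absolutely_continuous_cond_measure, symmetric]) simp_all
  then show ?thesis
    using assms by (simp add: nn_integral_cond_measure)
qed

lemma AE_snd_in_support: "AE z in \<pi>. snd z \<in> x ` {..<n}"
proof -
  have closed: "- (x ` {..<n}) \<in> sets borel"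
    by (intro borel_open) (auto intro: finite_imp_closed)
  have "emeasure \<pi> (snd -` (- (x ` {..<n}))) = emeasure (distr \<pi> borel snd) (- (x ` {..<n}))"
    using closed by (simp add: emeasure_distr)
  also have "\<dots> = 0"
    using closed by (simp add: distr_\<pi>_snd emeasure_discrete_distr)
  moreover have "snd -` (- (x ` {..<n})) \<in> sets \<pi>"
    using measurable_sets[OF borel_measurable_snd_pair closed] sets_\<pi> by simp
  ultimately show ?thesis
    by (intro AE_I'[of "snd -` (- (x ` {..<n}))"]) (auto intro: null_setsI)
qed

lemma nn_integral_coupling_disintegration:
  assumes c: "c \<in> borel_measurable borel"
  shows "(\<integral>\<^sup>+ z. c z \<partial>\<pi>) = (\<Sum>l<n. \<integral>\<^sup>+ y. cond_weight l y * c (y, x l) \<partial>\<nu>)"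
proof -
  have [measurable]: "(\<lambda>y. c (y, a)) \<in> borel_measurable borel" "(\<lambda>z. c (fst z, a)) \<in> borel_measurable borel" for a
    by (intro measurable_compose[OF _ c] borel_measurable_continuous_onI continuous_intros)+
  have "(\<integral>\<^sup>+ z. c z \<partial>\<pi>) = (\<integral>\<^sup>+ z. (\<Sum>l<n. indicator {x l} (snd z) * c (fst z, x l)) \<partial>\<pi>)"
    using AE_snd_in_support
  proof (intro nn_integral_cong_AE, eventually_elim)
    case (elim z)
    then obtain k where "k < n" "snd z = x k" by auto
    then show ?case
      using sum_indicator_inj_on[OF inj_x, of k "\<lambda>l. c (fst z, x l)"]
      by (cases z) (simp add: indicator_def eq_commute mult.commute)
  qed
  also have "\<dots> = (\<Sum>l<n. \<integral>\<^sup>+ z. indicator {x l} (snd z) * c (fst z, x l) \<partial>\<pi>)"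
    by (intro nn_integral_sum) (simp only: measurable_\<pi>, measurable)
  also have "\<dots> = (\<Sum>l<n. \<integral>\<^sup>+ y. cond_weight l y * c (y, x l) \<partial>\<nu>)"
    by (intro sum.cong refl nn_integral_cond_weight_mult[symmetric]) measurable
  finally show ?thesis .
qed

lemma AE_sum_cond_weight: "AE y in \<nu>. (\<Sum>l<n. cond_weight l y) = 1"
proof -
  interpret prob_space \<nu> by (rule prob_space_\<nu>)
  have "density \<nu> (\<lambda>y. \<Sum>l<n. cond_weight l y) = density \<nu> (\<lambda>_. 1)"
  proof (rule measure_eqI)
    fix A assume "A \<in> sets (density \<nu> (\<lambda>y. \<Sum>l<n. cond_weight l y))"
    then have A [measurable]: "A \<in> sets borel" by (simp add: sets_\<nu>)
    have "emeasure (density \<nu> (\<lambda>y. \<Sum>l<n. cond_weight l y)) A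
        = (\<integral>\<^sup>+ y. (\<Sum>l<n. cond_weight l y) * indicator A y \<partial>\<nu>)"
      by (rule emeasure_density) (simp_all add: sets_\<nu>)
    also have "\<dots> = (\<Sum>l<n. \<integral>\<^sup>+ y. cond_weight l y * indicator A y \<partial>\<nu>)"
      unfolding sum_distrib_right by (rule nn_integral_sum) simp
    also have "\<dots> = (\<integral>\<^sup>+ z. indicator A (fst z) \<partial>\<pi>)"
      by (subst nn_integral_coupling_disintegration) simp_all
    also have "\<dots> = emeasure (density \<nu> (\<lambda>_. 1)) A"
      by (simp add: nn_integral_fst_coupling emeasure_density sets_\<nu>)
    finally show "emeasure (density \<nu> (\<lambda>y. \<Sum>l<n. cond_weight l y)) A = emeasure (density \<nu> (\<lambda>_. 1)) A" .
  qed simp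
  then show ?thesis
    by (intro density_unique) simp_all
qed

lemma nn_integral_cond_weight:
  assumes "l < n"
  shows "integral\<^sup>N \<nu> (cond_weight l) = w l"
proof -
  have "w l = (\<Sum>k<n. w k * indicator {x l} (x k))"
    using sum_indicator_inj_on[OF inj_x assms, of w] by simp
  also have "\<dots> = emeasure (distr \<pi> borel snd) {x l}"
    by (simp add: distr_\<pi>_snd emeasure_discrete_distr)
  also have "\<dots> = emeasure \<pi> (snd -` {x l})"
    by (subst emeasure_distr) simp_all
  also have "\<dots> = (\<integral>\<^sup>+ z. indicator {x l} (snd z) \<partial>\<pi>)"
  proof -
    have "snd -` {x l} \<in> sets \<pi>"
      using measurable_sets[OF borel_measurable_snd_pair, of "{x l}"] sets_\<pi> by simp
    then show ?thesis
      by (simp flip: nn_integral_indicator add: indicator_vimage[symmetric])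
  qed
  also have "\<dots> = (\<Sum>k<n. \<integral>\<^sup>+ y. cond_weight k y * indicator {x l} (x k) \<partial>\<nu>)"
    by (subst nn_integral_coupling_disintegration) simp_all
  also have "\<dots> = integral\<^sup>N \<nu> (cond_weight l)"
    using sum_indicator_inj_on[OF inj_x assms, of "\<lambda>k. integral\<^sup>N \<nu> (cond_weight k)"]
    by (simp only: nn_integral_multc borel_measurable_cond_weight measurable_\<nu>)
  finally show ?thesis ..
qed

end

text \<open>\<open>f l y\<close> is the probability that \<open>y\<close> is transported to the \<open>l\<close>-th atom.\<close>

definition transition_weights :: "'a measure \<Rightarrow> nat \<Rightarrow> (nat \<Rightarrow> ennreal) \<Rightarrow> (nat \<Rightarrow> 'a \<Rightarrow> ennreal) \<Rightarrow> bool"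
  where "transition_weights \<nu> n w f \<longleftrightarrow> (\<forall>l. f l \<in> borel_measurable \<nu>)
    \<and> (AE y in \<nu>. (\<Sum>l<n. f l y) = 1) \<and> (\<forall>l<n. integral\<^sup>N \<nu> (f l) = w l)"

lemma coupling_transition_weights:
  assumes "prob_space \<nu>" "sets \<nu> = sets borel" "\<pi> \<in> couplings \<nu> (discrete_distr {..<n} w x)"
    and "inj_on x {..<n}"
  obtains f where "transition_weights \<nu> n w f"
    and "\<And>c. c \<in> borel_measurable borel \<Longrightarrow> (\<integral>\<^sup>+ z. c z \<partial>\<pi>) = (\<Sum>l<n. \<integral>\<^sup>+ y. f l y * c (y, x l) \<partial>\<nu>)"
proof -
  interpret discrete_coupling \<nu> \<pi> n w x
    by (rule discrete_coupling.intro[OF assms])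
  show ?thesis
    by (rule that[of cond_weight])
       (simp_all add: transition_weights_def AE_sum_cond_weight nn_integral_cond_weight nn_integral_coupling_disintegration)
qed

lemma glue_in_couplings:
  fixes x1 x2 :: "nat \<Rightarrow> 'a::euclidean_space"
  assumes f: "transition_weights \<nu> n1 w1 f" and g: "transition_weights \<nu> n2 w2 g"
    and "(\<Sum>l<n1. w1 l) = 1"
  shows "discrete_distr ({..<n1} \<times> {..<n2}) (\<lambda>(l, m). \<integral>\<^sup>+ y. f l y * g m y \<partial>\<nu>) (\<lambda>(l, m). (x1 l, x2 m))
    \<in> couplings (discrete_distr {..<n1} w1 x1) (discrete_distr {..<n2} w2 x2)"
proof (rule discrete_distr_couplingI)
  have meas [measurable]: "f l \<in> borel_measurable \<nu>" "g m \<in> borel_measurable \<nu>" for l m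
    using f g by (simp_all add: transition_weights_def)
  show "(\<Sum>m<n2. \<integral>\<^sup>+ y. f l y * g m y \<partial>\<nu>) = w1 l" if "l \<in> {..<n1}" for l
  proof -
    have "(\<Sum>m<n2. \<integral>\<^sup>+ y. f l y * g m y \<partial>\<nu>) = (\<integral>\<^sup>+ y. f l y * (\<Sum>m<n2. g m y) \<partial>\<nu>)"
      by (simp add: nn_integral_sum sum_distrib_left)
    also have "\<dots> = integral\<^sup>N \<nu> (f l)"
      using g by (intro nn_integral_cong_AE) (auto simp: transition_weights_def elim: AE_mp)
    finally show ?thesis
      using f that by (simp add: transition_weights_def)
  qed
  show "(\<Sum>l<n1. \<integral>\<^sup>+ y. f l y * g m y \<partial>\<nu>) = w2 m" if "m \<in> {..<n2}" for m
  proof -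
    have "(\<Sum>l<n1. \<integral>\<^sup>+ y. f l y * g m y \<partial>\<nu>) = (\<integral>\<^sup>+ y. (\<Sum>l<n1. f l y) * g m y \<partial>\<nu>)"
      by (simp add: nn_integral_sum sum_distrib_right)
    also have "\<dots> = integral\<^sup>N \<nu> (g m)"
      using f by (intro nn_integral_cong_AE) (auto simp: transition_weights_def elim: AE_mp)
    finally show ?thesis
      using g that by (simp add: transition_weights_def)
  qed
qed (use assms in auto)

section \<open>Pointwise estimates for glued costs\<close>

lemma norm_weighted_sum_sq_le:
  fixes b :: "'i \<Rightarrow> 'a::real_normed_vector"
  assumes "\<And>i. i \<in> I \<Longrightarrow> 0 \<le> q i"
  shows "norm (\<Sum>i\<in>I. q i *\<^sub>R b i)^2 \<le> (\<Sum>i\<in>I. q i) * (\<Sum>i\<in>I. q i * norm (b i)^2)"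
proof -
  have "norm (\<Sum>i\<in>I. q i *\<^sub>R b i) \<le> (\<Sum>i\<in>I. q i * norm (b i))"
    using norm_sum[of "\<lambda>i. q i *\<^sub>R b i" I] assms by (simp add: sum_mono)
  then have "norm (\<Sum>i\<in>I. q i *\<^sub>R b i)^2 \<le> (\<Sum>i\<in>I. sqrt (q i) * (sqrt (q i) * norm (b i)))^2"
    using assms by (simp add: power_mono mult.assoc[symmetric] cong: sum.cong)
  also have "\<dots> \<le> (\<Sum>i\<in>I. sqrt (q i)^2) * (\<Sum>i\<in>I. (sqrt (q i) * norm (b i))^2)"
    by (rule Cauchy_Schwarz_ineq_sum)
  also have "\<dots> = (\<Sum>i\<in>I. q i) * (\<Sum>i\<in>I. q i * norm (b i)^2)"
    using assms by (simp add: power_mult_distrib cong: sum.cong)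
  finally show ?thesis .
qed

text \<open>Here \<open>D i\<close> is a cost to a common point and \<open>a i\<close> a mean displacement from it
  (\<open>a = 0\<close> for \<open>p = 1\<close>).\<close>

lemma weighted_cost_le_inverse_weight:
  fixes a :: "nat \<Rightarrow> 'a::real_inner"
  assumes lam: "\<forall>i<N. 0 < lam i" "(\<Sum>i<N. lam i) = 1" and "j < N"
    and a_le: "\<forall>i<N. norm (a i)^2 \<le> D i"
    and K_le: "\<forall>i<N. K i \<le> D j + D i - 2 * inner (a j) (a i)"
  shows "(\<Sum>i\<in>{..<N} - {j}. lam i * K i) \<le> (\<Sum>i<N. lam i * D i) / lam j"
proof -
  let ?I = "{..<N} - {j}"
  define V where "V = (\<Sum>i\<in>?I. lam i * D i)"
  define s where "s = (\<Sum>i\<in>?I. lam i *\<^sub>R a i)"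
  have lam_j: "0 < lam j" "(\<Sum>i\<in>?I. lam i) = 1 - lam j"
    using lam \<open>j < N\<close> sum_diff1[of "{..<N}" lam j] by auto
  moreover have "0 \<le> (\<Sum>i\<in>?I. lam i)"
    using lam by (intro sum_nonneg) auto
  ultimately have lam_j_le: "0 \<le> 1 - lam j" by simp
  have S: "(\<Sum>i<N. lam i * D i) = lam j * D j + V"
    unfolding V_def using \<open>j < N\<close> by (simp add: sum.remove)
  have "(\<Sum>i\<in>?I. lam i * K i) \<le> (\<Sum>i\<in>?I. lam i * (D j + D i - 2 * inner (a j) (a i)))"
    using lam K_le by (intro sum_mono mult_left_mono) auto
  also have "\<dots> = (1 - lam j) * D j + V - 2 * inner (a j) s"
    unfolding V_def s_def lam_j(2)[symmetric]
    by (simp add: algebra_simps sum.distrib sum_subtractf sum_distrib_left sum_distrib_right inner_sum_right)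
  finally have K: "(\<Sum>i\<in>?I. lam i * K i) \<le> (1 - lam j) * D j + V - 2 * inner (a j) s" .
  have "norm s ^ 2 \<le> (1 - lam j) * (\<Sum>i\<in>?I. lam i * norm (a i)^2)"
    unfolding s_def lam_j(2)[symmetric] using lam by (intro norm_weighted_sum_sq_le) auto
  also have "\<dots> \<le> (1 - lam j) * V"
    unfolding V_def using lam a_le lam_j_le by (intro mult_left_mono sum_mono) auto
  finally have "norm s ^ 2 \<le> (1 - lam j) * V" .
  moreover have "0 \<le> (lam j)^2 * norm (a j)^2 + 2 * lam j * inner (a j) s + norm s ^ 2"
  proof -
    have "norm (lam j *\<^sub>R a j + s)^2 = (lam j)^2 * norm (a j)^2 + 2 * lam j * inner (a j) s + norm s ^ 2"
      unfolding power2_norm_eq_inner by (simp add: inner_add_left inner_add_right inner_commute power2_eq_square)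
    then show ?thesis by (metis zero_le_power2)
  qed
  moreover have "(lam j)^2 * norm (a j)^2 \<le> (lam j)^2 * D j"
    using a_le \<open>j < N\<close> by (intro mult_left_mono) auto
  ultimately have "0 \<le> (lam j)^2 * D j + 2 * lam j * inner (a j) s + (1 - lam j) * V"
    by linarith
  then have "lam j * ((1 - lam j) * D j + V - 2 * inner (a j) s) \<le> lam j * D j + V"
    by (simp add: algebra_simps power2_eq_square)
  with K lam_j(1) have "lam j * (\<Sum>i\<in>?I. lam i * K i) \<le> lam j * D j + V"
    by (meson less_imp_le mult_left_mono order_trans)
  with S lam_j(1) show ?thesis
    by (simp add: le_divide_eq mult.commute)
qed

lemma weighted_cost_le_double:
  fixes a :: "nat \<Rightarrow> 'a::real_inner"
  assumes lam: "\<forall>i<N. 0 \<le> lam i" "(\<Sum>i<N. lam i) = 1"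
    and K_le: "\<forall>j<N. \<forall>i<N. K j i \<le> D j + D i - 2 * inner (a j) (a i)"
  shows "(\<Sum>j<N. lam j * (\<Sum>i<N. lam i * K j i)) \<le> 2 * (\<Sum>i<N. lam i * D i)"
proof -
  define A where "A = (\<Sum>i<N. lam i *\<^sub>R a i)"
  define S where "S = (\<Sum>i<N. lam i * D i)"
  have "(\<Sum>j<N. lam j * (\<Sum>i<N. lam i * K j i))
      \<le> (\<Sum>j<N. lam j * (\<Sum>i<N. lam i * (D j + D i - 2 * inner (a j) (a i))))"
    using lam K_le by (intro sum_mono mult_left_mono) auto
  also have "\<dots> = (\<Sum>j<N. lam j * (D j + S - 2 * inner (a j) A))"
  proof (intro sum.cong refl arg_cong[where f="(*) (lam _)"])
    fix j
    have "(\<Sum>i<N. lam i * (D j + D i - 2 * inner (a j) (a i)))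
        = (\<Sum>i<N. lam i) * D j + S - 2 * inner (a j) A"
      unfolding A_def S_def
      by (simp add: algebra_simps sum.distrib sum_subtractf sum_distrib_left sum_distrib_right inner_sum_right)
    then show "(\<Sum>i<N. lam i * (D j + D i - 2 * inner (a j) (a i)))
        = D j + S - 2 * inner (a j) A"
      using lam(2) by simp
  qed
  also have "\<dots> = (\<Sum>j<N. lam j * D j) + (\<Sum>j<N. lam j) * S - 2 * (\<Sum>j<N. lam j * inner (a j) A)"
    by (simp add: ring_distribs sum.distrib sum_subtractf sum_distrib_left sum_distrib_right mult.left_commute)
  also have "\<dots> = 2 * S - 2 * inner A A"
    unfolding A_def using lam(2) by (simp add: inner_sum_left S_def)
  also have "\<dots> \<le> 2 * S"
    by simp
  finally show ?thesis unfolding S_def .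
qed


lemma double_sum_split:
  fixes r s A B :: "'i \<Rightarrow> real"
  assumes "(\<Sum>l\<in>L. r l) = 1" "(\<Sum>m\<in>M. s m) = 1"
  shows "(\<Sum>l\<in>L. \<Sum>m\<in>M. r l * s m * (A l + B m)) = (\<Sum>l\<in>L. r l * A l) + (\<Sum>m\<in>M. s m * B m)"
proof -
  have "(\<Sum>l\<in>L. r l * A l) * (\<Sum>m\<in>M. s m) + (\<Sum>l\<in>L. r l) * (\<Sum>m\<in>M. s m * B m)
      = (\<Sum>l\<in>L. \<Sum>m\<in>M. r l * A l * s m + r l * (s m * B m))"
    by (simp add: sum_product sum.distrib)
  also have "\<dots> = (\<Sum>l\<in>L. \<Sum>m\<in>M. r l * s m * (A l + B m))"
    by (simp add: algebra_simps)
  finally have "(\<Sum>l\<in>L. \<Sum>m\<in>M. r l * s m * (A l + B m))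
      = (\<Sum>l\<in>L. r l * A l) * (\<Sum>m\<in>M. s m) + (\<Sum>l\<in>L. r l) * (\<Sum>m\<in>M. s m * B m)" ..
  then show ?thesis using assms by simp
qed

lemma double_sum_norm_diff_le:
  fixes u v :: "'i \<Rightarrow> 'a::real_normed_vector"
  assumes "\<And>l. l \<in> L \<Longrightarrow> 0 \<le> r l" "\<And>m. m \<in> M \<Longrightarrow> 0 \<le> s m"
    and "(\<Sum>l\<in>L. r l) = 1" "(\<Sum>m\<in>M. s m) = 1"
  shows "(\<Sum>l\<in>L. \<Sum>m\<in>M. r l * s m * norm (u l - v m))
    \<le> (\<Sum>l\<in>L. r l * norm (y - u l)) + (\<Sum>m\<in>M. s m * norm (y - v m))"
proof -
  have "(\<Sum>l\<in>L. \<Sum>m\<in>M. r l * s m * norm (u l - v m))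
      \<le> (\<Sum>l\<in>L. \<Sum>m\<in>M. r l * s m * (norm (y - u l) + norm (y - v m)))"
  proof (intro sum_mono mult_left_mono)
    fix l m
    show "norm (u l - v m) \<le> norm (y - u l) + norm (y - v m)"
      using norm_triangle_ineq4[of "y - v m" "y - u l"] by (simp add: add.commute)
  qed (use assms(1,2) in auto)
  then show ?thesis
    using double_sum_split[OF assms(3,4)] by simp
qed

lemma double_sum_norm_diff_sq:
  fixes u v :: "'i \<Rightarrow> 'a::real_inner"
  assumes "(\<Sum>l\<in>L. r l) = 1" "(\<Sum>m\<in>M. s m) = 1"
  shows "(\<Sum>l\<in>L. \<Sum>m\<in>M. r l * s m * norm (u l - v m)^2)
    = (\<Sum>l\<in>L. r l * norm (y - u l)^2) + (\<Sum>m\<in>M. s m * norm (y - v m)^2)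
      - 2 * inner (\<Sum>l\<in>L. r l *\<^sub>R (u l - y)) (\<Sum>m\<in>M. s m *\<^sub>R (v m - y))"
proof -
  have "norm (u l - v m)^2 = (norm (y - u l)^2 + norm (y - v m)^2) - 2 * inner (u l - y) (v m - y)" for l m
  proof -
    have "u l - v m = (u l - y) - (v m - y)" by simp
    then show ?thesis
      unfolding power2_norm_eq_inner
      by (simp only:) (simp add: inner_diff_left inner_diff_right inner_commute norm_minus_commute algebra_simps)
  qed
  then have "(\<Sum>l\<in>L. \<Sum>m\<in>M. r l * s m * norm (u l - v m)^2)
      = (\<Sum>l\<in>L. \<Sum>m\<in>M. r l * s m * (norm (y - u l)^2 + norm (y - v m)^2))
        - 2 * (\<Sum>l\<in>L. \<Sum>m\<in>M. r l * s m * inner (u l - y) (v m - y))"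
    by (simp add: right_diff_distrib sum_subtractf sum_distrib_left mult.left_commute)
  also have "inner (\<Sum>l\<in>L. r l *\<^sub>R (u l - y)) (\<Sum>m\<in>M. s m *\<^sub>R (v m - y))
      = (\<Sum>l\<in>L. inner (r l *\<^sub>R (u l - y)) (\<Sum>m\<in>M. s m *\<^sub>R (v m - y)))"
    by (rule inner_sum_left)
  then have "(\<Sum>l\<in>L. \<Sum>m\<in>M. r l * s m * inner (u l - y) (v m - y))
      = inner (\<Sum>l\<in>L. r l *\<^sub>R (u l - y)) (\<Sum>m\<in>M. s m *\<^sub>R (v m - y))"
    by (simp add: inner_sum_right sum_distrib_left ac_simps)
  finally show ?thesis
    using double_sum_split[OF assms] by simp
qed

text \<open>For \<open>p = 1\<close> this is the triangle inequality through \<open>y\<close>; for \<open>p = 2\<close> it is an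
  identity, obtained by expanding \<open>norm (u - v)^2\<close> around \<open>y\<close>.\<close>

lemma glued_cost_split:
  fixes z :: "nat \<Rightarrow> nat \<Rightarrow> 'a::real_inner"
  assumes p: "p = 1 \<or> p = 2"
    and r: "\<forall>i<N. \<forall>l<n i. 0 \<le> r i l" "\<forall>i<N. (\<Sum>l<n i. r i l) = 1"
  obtains a :: "nat \<Rightarrow> 'a" where "\<forall>i<N. norm (a i)^2 \<le> (\<Sum>l<n i. r i l * norm (y - z i l) powr p)"
    and "\<forall>j<N. \<forall>i<N. (\<Sum>l<n j. \<Sum>m<n i. r j l * r i m * norm (z j l - z i m) powr p)
      \<le> (\<Sum>l<n j. r j l * norm (y - z j l) powr p) + (\<Sum>m<n i. r i m * norm (y - z i m) powr p)
        - 2 * inner (a j) (a i)"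
  using p
proof
  assume "p = 1"
  moreover have "(\<Sum>l<n j. \<Sum>m<n i. r j l * r i m * norm (z j l - z i m))
      \<le> (\<Sum>l<n j. r j l * norm (y - z j l)) + (\<Sum>m<n i. r i m * norm (y - z i m))" if "j < N" "i < N" for i j
    using r that by (intro double_sum_norm_diff_le) auto
  ultimately show ?thesis
    using r by (intro that[of "\<lambda>_. 0"]) (auto intro!: sum_nonneg)
next
  assume "p = 2"
  have "norm (\<Sum>l<n i. r i l *\<^sub>R (z i l - y))^2 \<le> (\<Sum>l<n i. r i l * norm (y - z i l)^2)" if "i < N" for i
    using norm_weighted_sum_sq_le[of "{..<n i}" "r i" "\<lambda>l. z i l - y"] r that
    by (simp add: norm_minus_commute)
  moreover have "(\<Sum>l<n j. \<Sum>m<n i. r j l * r i m * norm (z j l - z i m)^2)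
      = (\<Sum>l<n j. r j l * norm (y - z j l)^2) + (\<Sum>m<n i. r i m * norm (y - z i m)^2)
        - 2 * inner (\<Sum>l<n j. r j l *\<^sub>R (z j l - y)) (\<Sum>m<n i. r i m *\<^sub>R (z i m - y))"
    if "j < N" "i < N" for i j
    using r that by (intro double_sum_norm_diff_sq) auto
  ultimately show ?thesis
    using \<open>p = 2\<close> by (intro that[of "\<lambda>i. \<Sum>l<n i. r i l *\<^sub>R (z i l - y)"]) auto
qed

lemma sum_ennreal_mult:
  assumes "\<And>i. i \<in> I \<Longrightarrow> 0 \<le> a i" "\<And>i. i \<in> I \<Longrightarrow> 0 \<le> b i"
  shows "(\<Sum>i\<in>I. ennreal (a i) * ennreal (b i)) = ennreal (\<Sum>i\<in>I. a i * b i)"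
  using assms by (simp add: ennreal_mult[symmetric] sum_ennreal)

lemma glued_cost_ennreal:
  assumes "\<And>l. l \<in> L \<Longrightarrow> 0 \<le> r l" "\<And>m. m \<in> M \<Longrightarrow> 0 \<le> s m" "\<And>l m. 0 \<le> c l m"
  shows "(\<Sum>l\<in>L. \<Sum>m\<in>M. ennreal (r l) * ennreal (s m) * ennreal (c l m))
    = ennreal (\<Sum>l\<in>L. \<Sum>m\<in>M. r l * s m * c l m)"
  using assms by (simp add: ennreal_mult[symmetric] sum_ennreal sum_nonneg)

lemma sum_eq_1_enn2real:
  fixes F :: "nat \<Rightarrow> ennreal"
  assumes "(\<Sum>l<n. F l) = 1"
  shows "\<forall>l<n. F l = ennreal (enn2real (F l))" "(\<Sum>l<n. enn2real (F l)) = 1"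
proof -
  have fin: "F l \<noteq> \<top>" if "l < n" for l
    using member_le_sum[of l "{..<n}" F] that assms by (auto simp: top_unique)
  then show "\<forall>l<n. F l = ennreal (enn2real (F l))"
    by (simp add: ennreal_enn2real_if)
  have "ennreal (\<Sum>l<n. enn2real (F l)) = (\<Sum>l<n. F l)"
    using fin by (simp add: sum_ennreal[symmetric] ennreal_enn2real_if del: sum_ennreal)
  then show "(\<Sum>l<n. enn2real (F l)) = 1"
    using assms by (simp add: sum_nonneg)
qed

lemma glued_cost_le_inverse_weight:
  fixes z :: "nat \<Rightarrow> nat \<Rightarrow> 'a::real_inner"
  assumes p: "p = 1 \<or> p = 2" and lam: "\<forall>i<N. 0 < lam i" "(\<Sum>i<N. lam i) = 1" and "j < N"
    and r: "\<forall>i<N. \<forall>l<n i. 0 \<le> r i l" "\<forall>i<N. (\<Sum>l<n i. r i l) = 1"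
  shows "(\<Sum>i\<in>{..<N} - {j}. ennreal (lam i) * (\<Sum>l<n j. \<Sum>m<n i.
      ennreal (r j l) * ennreal (r i m) * ennreal (norm (z j l - z i m) powr p)))
    \<le> ennreal (1 / lam j) * (\<Sum>i<N. ennreal (lam i) * (\<Sum>l<n i. ennreal (r i l) * ennreal (norm (y - z i l) powr p)))"
proof -
  define K where "K i = (\<Sum>l<n j. \<Sum>m<n i. r j l * r i m * norm (z j l - z i m) powr p)" for i
  define D where "D i = (\<Sum>l<n i. r i l * norm (y - z i l) powr p)" for i
  obtain a :: "nat \<Rightarrow> 'a" where "\<forall>i<N. norm (a i)^2 \<le> D i"
    and "\<forall>j<N. \<forall>i<N. (\<Sum>l<n j. \<Sum>m<n i. r j l * r i m * norm (z j l - z i m) powr p) \<le> D j + D i - 2 * inner (a j) (a i)"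
    unfolding D_def using glued_cost_split[OF p r] by blast
  then have "(\<Sum>i\<in>{..<N} - {j}. lam i * K i) \<le> (\<Sum>i<N. lam i * D i) / lam j"
    unfolding K_def using \<open>j < N\<close> by (intro weighted_cost_le_inverse_weight[OF lam \<open>j < N\<close>, of a]) auto
  then have "ennreal (\<Sum>i\<in>{..<N} - {j}. lam i * K i) \<le> ennreal (1 / lam j) * ennreal (\<Sum>i<N. lam i * D i)"
    using lam \<open>j < N\<close> by (subst ennreal_mult'[symmetric]) (simp_all add: ennreal_leI less_imp_le)
  moreover have "0 \<le> K i" "0 \<le> D i" if "i < N" for i
    unfolding K_def D_def using r that \<open>j < N\<close> by (auto intro!: sum_nonneg)
  then have "(\<Sum>i\<in>{..<N} - {j}. ennreal (lam i) * ennreal (K i)) = ennreal (\<Sum>i\<in>{..<N} - {j}. lam i * K i)"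
    "(\<Sum>i<N. ennreal (lam i) * ennreal (D i)) = ennreal (\<Sum>i<N. lam i * D i)"
    using lam by (auto intro!: sum_ennreal_mult simp: less_imp_le)
  moreover have "(\<Sum>l<n j. \<Sum>m<n i. ennreal (r j l) * ennreal (r i m) * ennreal (norm (z j l - z i m) powr p))
      = ennreal (K i)" if "i < N" for i
    unfolding K_def using r that \<open>j < N\<close> by (intro glued_cost_ennreal) auto
  moreover have "(\<Sum>l<n i. ennreal (r i l) * ennreal (norm (y - z i l) powr p)) = ennreal (D i)" if "i < N" for i
    unfolding D_def using r that by (intro sum_ennreal_mult) auto
  ultimately show ?thesis
    by simp
qed

lemma glued_cost_le_double:
  fixes z :: "nat \<Rightarrow> nat \<Rightarrow> 'a::real_inner"
  assumes p: "p = 1 \<or> p = 2" and lam: "\<forall>i<N. 0 \<le> lam i" "(\<Sum>i<N. lam i) = 1"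
    and r: "\<forall>i<N. \<forall>l<n i. 0 \<le> r i l" "\<forall>i<N. (\<Sum>l<n i. r i l) = 1"
  shows "(\<Sum>j<N. ennreal (lam j) * (\<Sum>i<N. ennreal (lam i) * (\<Sum>l<n j. \<Sum>m<n i.
      ennreal (r j l) * ennreal (r i m) * ennreal (norm (z j l - z i m) powr p))))
    \<le> 2 * (\<Sum>i<N. ennreal (lam i) * (\<Sum>l<n i. ennreal (r i l) * ennreal (norm (y - z i l) powr p)))"
proof -
  define K where "K j i = (\<Sum>l<n j. \<Sum>m<n i. r j l * r i m * norm (z j l - z i m) powr p)" for j i
  define D where "D i = (\<Sum>l<n i. r i l * norm (y - z i l) powr p)" for i
  have K_nonneg: "0 \<le> K j i" if "j < N" "i < N" for i j
    unfolding K_def using r that by (auto intro!: sum_nonneg)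
  have D_nonneg: "0 \<le> D i" if "i < N" for i
    unfolding D_def using r that by (auto intro!: sum_nonneg)
  obtain a :: "nat \<Rightarrow> 'a" where "\<forall>j<N. \<forall>i<N. K j i \<le> D j + D i - 2 * inner (a j) (a i)"
    by (rule glued_cost_split[OF p r, where y=y and z=z]) (rule that, simp add: K_def D_def)
  then have "(\<Sum>j<N. lam j * (\<Sum>i<N. lam i * K j i)) \<le> 2 * (\<Sum>i<N. lam i * D i)"
    by (rule weighted_cost_le_double[OF lam])
  then have le: "ennreal (\<Sum>j<N. lam j * (\<Sum>i<N. lam i * K j i)) \<le> 2 * ennreal (\<Sum>i<N. lam i * D i)"
    using ennreal_leI by (fastforce simp: ennreal_mult')
  have "(\<Sum>j<N. ennreal (lam j) * (\<Sum>i<N. ennreal (lam i) * (\<Sum>l<n j. \<Sum>m<n i.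
      ennreal (r j l) * ennreal (r i m) * ennreal (norm (z j l - z i m) powr p))))
      = (\<Sum>j<N. ennreal (lam j) * ennreal (\<Sum>i<N. lam i * K j i))"
  proof (intro sum.cong refl arg_cong[where f="(*) _"])
    fix j assume "j \<in> {..<N}"
    have "(\<Sum>i<N. ennreal (lam i) * (\<Sum>l<n j. \<Sum>m<n i.
        ennreal (r j l) * ennreal (r i m) * ennreal (norm (z j l - z i m) powr p)))
        = (\<Sum>i<N. ennreal (lam i) * ennreal (K j i))"
      unfolding K_def using r \<open>j \<in> {..<N}\<close> by (intro sum.cong refl arg_cong[where f="(*) _"] glued_cost_ennreal) auto
    also have "\<dots> = ennreal (\<Sum>i<N. lam i * K j i)"
      using lam K_nonneg \<open>j \<in> {..<N}\<close> by (intro sum_ennreal_mult) auto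
    finally show "(\<Sum>i<N. ennreal (lam i) * (\<Sum>l<n j. \<Sum>m<n i.
        ennreal (r j l) * ennreal (r i m) * ennreal (norm (z j l - z i m) powr p)))
        = ennreal (\<Sum>i<N. lam i * K j i)" .
  qed
  also have "\<dots> = ennreal (\<Sum>j<N. lam j * (\<Sum>i<N. lam i * K j i))"
    using lam K_nonneg by (intro sum_ennreal_mult) (auto intro!: sum_nonneg)
  also have "\<dots> \<le> 2 * ennreal (\<Sum>i<N. lam i * D i)"
    by (rule le)
  also have "ennreal (\<Sum>i<N. lam i * D i) = (\<Sum>i<N. ennreal (lam i) * ennreal (D i))"
    using lam D_nonneg by (intro sum_ennreal_mult[symmetric]) auto
  also have "\<dots> = (\<Sum>i<N. ennreal (lam i) * (\<Sum>l<n i. ennreal (r i l) * ennreal (norm (y - z i l) powr p)))"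
    unfolding D_def using r by (intro sum.cong refl arg_cong[where f="(*) _"] sum_ennreal_mult[symmetric]) auto
  finally show ?thesis .
qed

section \<open>Sums of infima\<close>

lemma le_add_mult_INF_ennreal:
  fixes X T :: ennreal and c :: real
  assumes "0 < c" "\<And>b. b \<in> C \<Longrightarrow> T \<le> X + ennreal c * F b"
  shows "T \<le> X + ennreal c * (INF b\<in>C. F b)"
proof (cases "C = {}")
  case True
  then show ?thesis using assms(1) by (simp add: ennreal_mult_top)
next
  case False
  have "continuous (at_right (INF b\<in>C. F b)) (\<lambda>t. X + ennreal c * t)"
  proof -
    have "continuous_on UNIV (\<lambda>t. X + ennreal c * t)"
      by (intro continuous_on_add continuous_on_const ennreal_continuous_on_cmult continuous_on_id) simp
    then show ?thesis
      by (rule continuous_on_imp_continuous_within) auto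
  qed
  then have "X + ennreal c * (INF b\<in>C. F b) = (INF b\<in>C. X + ennreal c * F b)"
    using continuous_at_Inf_mono[of "\<lambda>t. X + ennreal c * t" "F ` C"] False
    by (simp add: image_comp monoI add_left_mono mult_left_mono)
  then show ?thesis
    using assms(2) by (simp add: le_INF_iff)
qed

lemma le_sum_INF_ennreal:
  fixes c :: "'i \<Rightarrow> real" and F :: "'i \<Rightarrow> 'b \<Rightarrow> ennreal"
  assumes "finite I" "\<And>i. i \<in> I \<Longrightarrow> 0 < c i"
    and "\<And>g. (\<And>i. i \<in> I \<Longrightarrow> g i \<in> C i) \<Longrightarrow> T \<le> (\<Sum>i\<in>I. ennreal (c i) * F i (g i))"
  shows "T \<le> (\<Sum>i\<in>I. ennreal (c i) * (INF b\<in>C i. F i b))"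
proof -
  have "T \<le> X + (\<Sum>i\<in>I. ennreal (c i) * (INF b\<in>C i. F i b))"
    if "\<And>g. (\<And>i. i \<in> I \<Longrightarrow> g i \<in> C i) \<Longrightarrow> T \<le> X + (\<Sum>i\<in>I. ennreal (c i) * F i (g i))" for X
    using assms(1,2) that
  proof (induction I arbitrary: X rule: finite_induct)
    case empty
    then show ?case by simp
  next
    case (insert k I)
    let ?Y = "X + ennreal (c k) * (INF b\<in>C k. F k b)"
    have "T \<le> ?Y + (\<Sum>i\<in>I. ennreal (c i) * (INF b\<in>C i. F i b))"
    proof (rule insert.IH)
      fix g assume g: "\<And>i. i \<in> I \<Longrightarrow> g i \<in> C i"
      have "T \<le> (X + (\<Sum>i\<in>I. ennreal (c i) * F i (g i))) + ennreal (c k) * (INF b\<in>C k. F k b)"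
      proof (rule le_add_mult_INF_ennreal)
        fix b assume "b \<in> C k"
        then have "T \<le> X + (\<Sum>i\<in>insert k I. ennreal (c i) * F i ((g(k := b)) i))"
          using g by (intro insert.prems) auto
        moreover have "(\<Sum>i\<in>I. ennreal (c i) * F i ((g(k := b)) i)) = (\<Sum>i\<in>I. ennreal (c i) * F i (g i))"
          using insert.hyps by (intro sum.cong) auto
        ultimately show "T \<le> X + (\<Sum>i\<in>I. ennreal (c i) * F i (g i)) + ennreal (c k) * F k b"
          using insert.hyps by (simp add: ac_simps)
      qed (simp add: insert.prems)
      then show "T \<le> ?Y + (\<Sum>i\<in>I. ennreal (c i) * F i (g i))"
        by (simp add: ac_simps)
    qed (use insert.prems in auto)
    then show ?case
      using insert.hyps by (simp add: ac_simps)
  qed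
  from this[of 0] assms(3) show ?thesis by simp
qed

lemma le_mult_sum_INF_ennreal:
  fixes c :: "'i \<Rightarrow> real" and F :: "'i \<Rightarrow> 'b \<Rightarrow> ennreal"
  assumes "finite I" "0 < a" "\<And>i. i \<in> I \<Longrightarrow> 0 < c i"
    and "\<And>g. (\<And>i. i \<in> I \<Longrightarrow> g i \<in> C i) \<Longrightarrow> T \<le> ennreal a * (\<Sum>i\<in>I. ennreal (c i) * F i (g i))"
  shows "T \<le> ennreal a * (\<Sum>i\<in>I. ennreal (c i) * (INF b\<in>C i. F i b))"
proof -
  have scale: "ennreal a * (\<Sum>i\<in>I. ennreal (c i) * G i) = (\<Sum>i\<in>I. ennreal (a * c i) * G i)" for G
    using assms(2) by (simp add: sum_distrib_left ennreal_mult' mult.assoc)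
  show ?thesis
    unfolding scale using assms by (intro le_sum_INF_ennreal) (auto simp: scale)
qed

section \<open>Gluing couplings along a common measure\<close>

locale discrete_barycenter_problem =
  fixes p :: real and N :: nat and lam :: "nat \<Rightarrow> real"
    and n :: "nat \<Rightarrow> nat" and w :: "nat \<Rightarrow> nat \<Rightarrow> real" and x :: "nat \<Rightarrow> nat \<Rightarrow> 'a::euclidean_space"
    and mu :: "nat \<Rightarrow> 'a measure" and \<nu> :: "'a measure"
  assumes p: "p = 1 \<or> p = 2"
    and lam_pos: "\<forall>i<N. 0 < lam i" and lam_sum: "(\<Sum>i<N. lam i) = 1"
    and w_nonneg: "\<forall>i<N. \<forall>l<n i. 0 \<le> w i l" and w_sum: "\<forall>i<N. (\<Sum>l<n i. w i l) = 1"
    and x_inj: "\<forall>i<N. inj_on (x i) {..<n i}"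
    and mu: "\<forall>i<N. mu i = discrete_distr {..<n i} (\<lambda>l. ennreal (w i l)) (x i)"
    and prob_space_\<nu>: "prob_space \<nu>" and sets_\<nu> [measurable_cong]: "sets \<nu> = sets borel"
begin

lemma sum_w_ennreal: "i < N \<Longrightarrow> (\<Sum>l<n i. ennreal (w i l)) = 1"
  using w_nonneg w_sum by (subst sum_ennreal) auto

end

locale glued_marginals = discrete_barycenter_problem +
  fixes f :: "nat \<Rightarrow> nat \<Rightarrow> 'a::euclidean_space \<Rightarrow> ennreal"
  assumes f: "\<forall>i<N. transition_weights \<nu> (n i) (\<lambda>l. ennreal (w i l)) (f i)"
begin

lemma borel_measurable_f [measurable]: "i < N \<Longrightarrow> f i l \<in> borel_measurable \<nu>"
  using f by (simp add: transition_weights_def)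

definition glued_coupling :: "nat \<Rightarrow> nat \<Rightarrow> ('a \<times> 'a) measure" where
  "glued_coupling j i = discrete_distr ({..<n j} \<times> {..<n i})
     (\<lambda>(l, m). \<integral>\<^sup>+ y. f j l y * f i m y \<partial>\<nu>) (\<lambda>(l, m). (x j l, x i m))"

definition glued_cost :: "nat \<Rightarrow> nat \<Rightarrow> 'a \<Rightarrow> ennreal" where
  "glued_cost j i y = (\<Sum>l<n j. \<Sum>m<n i. f j l y * f i m y * ennreal (norm (x j l - x i m) powr p))"

definition point_cost :: "nat \<Rightarrow> 'a \<Rightarrow> ennreal" where
  "point_cost i y = (\<Sum>l<n i. f i l y * ennreal (norm (y - x i l) powr p))"

lemma borel_measurable_glued_cost [measurable]:
  "j < N \<Longrightarrow> i < N \<Longrightarrow> glued_cost j i \<in> borel_measurable \<nu>"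
  unfolding glued_cost_def by measurable

lemma borel_measurable_point_cost [measurable]: "i < N \<Longrightarrow> point_cost i \<in> borel_measurable \<nu>"
  unfolding point_cost_def by measurable

lemma glued_coupling_in_couplings:
  "j < N \<Longrightarrow> i < N \<Longrightarrow> glued_coupling j i \<in> couplings (mu j) (mu i)"
  unfolding glued_coupling_def using f mu w_sum by (simp add: glue_in_couplings sum_w_ennreal)

lemma transport_cost_glued_coupling:
  assumes "j < N" "i < N"
  shows "(\<integral>\<^sup>+ z. ennreal (norm (fst z - snd z) powr p) \<partial>glued_coupling j i) = integral\<^sup>N \<nu> (glued_cost j i)"
proof -
  have "(\<integral>\<^sup>+ z. ennreal (norm (fst z - snd z) powr p) \<partial>glued_coupling j i)
      = (\<Sum>l<n j. \<Sum>m<n i. (\<integral>\<^sup>+ y. f j l y * f i m y \<partial>\<nu>) * ennreal (norm (x j l - x i m) powr p))"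
    unfolding glued_coupling_def
    by (subst nn_integral_discrete_distr[OF _ borel_measurable_transport_cost])
       (simp_all add: sum.cartesian_product split_def)
  also have "\<dots> = integral\<^sup>N \<nu> (glued_cost j i)"
    unfolding glued_cost_def using assms
    by (simp add: nn_integral_multc nn_integral_sum)
  finally show ?thesis .
qed

lemma wass_pp_le_glued_cost:
  assumes "j < N" "i < N"
  shows "wass_pp p (mu j) (mu i) \<le> integral\<^sup>N \<nu> (glued_cost j i)"
  using wass_pp_le_cost[OF glued_coupling_in_couplings[OF assms], of p]
  by (simp add: transport_cost_glued_coupling[OF assms])

lemma wass_pp_mixture_le_glued_cost:
  assumes "i < N"
  shows "wass_pp p (mixture N lam mu) (mu i) \<le> (\<Sum>j<N. ennreal (lam j) * integral\<^sup>N \<nu> (glued_cost j i))"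
proof -
  let ?S = "\<lambda>j. {..<n j} \<times> {..<n i}" and ?G = "\<lambda>j (l, m). \<integral>\<^sup>+ y. f j l y * f i m y \<partial>\<nu>"
    and ?u = "\<lambda>j (l, m). x j l" and ?v = "\<lambda>j (l :: nat, m). x i m"
  have pts: "(\<lambda>k. (?u j k, ?v j k)) = (\<lambda>(l, m). (x j l, x i m))" for j
    by auto
  have "wass_pp p (mixture N lam mu) (mu i) \<le> (\<Sum>j<N. ennreal (lam j) *
      (\<integral>\<^sup>+ z. ennreal (norm (fst z - snd z) powr p) \<partial>discrete_distr (?S j) (?G j) (\<lambda>k. (?u j k, ?v j k))))"
  proof (rule wass_pp_mixture_le)
    fix j assume "j < N"
    with glued_coupling_in_couplings[OF this assms] show "discrete_distr (?S j) (?G j) (?u j) = mu j"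
      "discrete_distr (?S j) (?G j) (?v j) = mu i"
      unfolding couplings_def glued_coupling_def pts[symmetric]
      by (simp_all only: distr_fst_discrete_distr distr_snd_discrete_distr mem_Collect_eq)
    have "prob_space (glued_coupling j i)"
      using glued_coupling_in_couplings[OF \<open>j < N\<close> assms] by (simp add: couplings_def)
    then have "emeasure (glued_coupling j i) UNIV = 1"
      using prob_space.emeasure_space_1 unfolding glued_coupling_def by force
    then show "(\<Sum>k\<in>?S j. ?G j k) = 1"
      unfolding glued_coupling_def by (simp add: emeasure_discrete_distr)
  qed (use lam_pos lam_sum assms in \<open>auto simp: mu sum_w_ennreal\<close>)
  also have "\<dots> = (\<Sum>j<N. ennreal (lam j) * integral\<^sup>N \<nu> (glued_cost j i))"
    using assms by (intro sum.cong refl) (simp add: pts transport_cost_glued_coupling[unfolded glued_coupling_def])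
  finally show ?thesis .
qed

lemma AE_sum_f_eq_1: "AE y in \<nu>. \<forall>i<N. (\<Sum>l<n i. f i l y) = 1"
proof -
  have "AE y in \<nu>. \<forall>i\<in>{..<N}. (\<Sum>l<n i. f i l y) = 1"
    using f by (intro eventually_ball_finite) (auto simp: transition_weights_def)
  then show ?thesis by eventually_elim auto
qed

lemma f_enn2real:
  assumes "\<forall>i<N. (\<Sum>l<n i. f i l y) = 1" "i < N"
  shows "\<forall>l<n i. f i l y = ennreal (enn2real (f i l y))" "(\<Sum>l<n i. enn2real (f i l y)) = 1"
  using sum_eq_1_enn2real[where F="\<lambda>l. f i l y"] assms by auto

lemma glued_cost_enn2real:
  assumes "\<forall>i<N. (\<Sum>l<n i. f i l y) = 1" "j < N" "i < N"
  shows "glued_cost j i y = (\<Sum>l<n j. \<Sum>m<n i. ennreal (enn2real (f j l y)) * ennreal (enn2real (f i m y))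
    * ennreal (norm (x j l - x i m) powr p))"
  using f_enn2real(1)[OF assms(1,2)] f_enn2real(1)[OF assms(1,3)]
  by (auto simp: glued_cost_def intro!: sum.cong)

lemma point_cost_enn2real:
  assumes "\<forall>i<N. (\<Sum>l<n i. f i l y) = 1" "i < N"
  shows "point_cost i y = (\<Sum>l<n i. ennreal (enn2real (f i l y)) * ennreal (norm (y - x i l) powr p))"
  using f_enn2real(1)[OF assms] by (auto simp: point_cost_def intro!: sum.cong)

lemma AE_glued_cost_le_inverse_weight:
  assumes "j < N"
  shows "AE y in \<nu>. (\<Sum>i\<in>{..<N} - {j}. ennreal (lam i) * glued_cost j i y)
    \<le> ennreal (1 / lam j) * (\<Sum>i<N. ennreal (lam i) * point_cost i y)"
  using AE_sum_f_eq_1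
proof eventually_elim
  case (elim y)
  have r: "\<forall>i<N. \<forall>l<n i. 0 \<le> enn2real (f i l y)" "\<forall>i<N. (\<Sum>l<n i. enn2real (f i l y)) = 1"
    using f_enn2real(2)[OF elim] by auto
  have "(\<Sum>i\<in>{..<N} - {j}. ennreal (lam i) * glued_cost j i y)
      = (\<Sum>i\<in>{..<N} - {j}. ennreal (lam i) * (\<Sum>l<n j. \<Sum>m<n i. ennreal (enn2real (f j l y))
          * ennreal (enn2real (f i m y)) * ennreal (norm (x j l - x i m) powr p)))"
    using assms by (intro sum.cong refl) (simp add: glued_cost_enn2real[OF elim])
  also have "\<dots> \<le> ennreal (1 / lam j) * (\<Sum>i<N. ennreal (lam i) *
      (\<Sum>l<n i. ennreal (enn2real (f i l y)) * ennreal (norm (y - x i l) powr p)))"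
    by (rule glued_cost_le_inverse_weight[OF p lam_pos lam_sum assms r])
  also have "\<dots> = ennreal (1 / lam j) * (\<Sum>i<N. ennreal (lam i) * point_cost i y)"
    by (simp add: point_cost_enn2real[OF elim])
  finally show ?case .
qed

lemma AE_glued_cost_le_double:
  "AE y in \<nu>. (\<Sum>j<N. ennreal (lam j) * (\<Sum>i<N. ennreal (lam i) * glued_cost j i y))
    \<le> 2 * (\<Sum>i<N. ennreal (lam i) * point_cost i y)"
  using AE_sum_f_eq_1
proof eventually_elim
  case (elim y)
  have r: "\<forall>i<N. \<forall>l<n i. 0 \<le> enn2real (f i l y)" "\<forall>i<N. (\<Sum>l<n i. enn2real (f i l y)) = 1"
    using f_enn2real(2)[OF elim] by auto
  have lam: "\<forall>i<N. 0 \<le> lam i"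
    using lam_pos by (simp add: less_imp_le)
  have "(\<Sum>j<N. ennreal (lam j) * (\<Sum>i<N. ennreal (lam i) * glued_cost j i y))
      = (\<Sum>j<N. ennreal (lam j) * (\<Sum>i<N. ennreal (lam i) * (\<Sum>l<n j. \<Sum>m<n i. ennreal (enn2real (f j l y))
          * ennreal (enn2real (f i m y)) * ennreal (norm (x j l - x i m) powr p))))"
    by (simp add: glued_cost_enn2real[OF elim])
  also have "\<dots> \<le> 2 * (\<Sum>i<N. ennreal (lam i) *
      (\<Sum>l<n i. ennreal (enn2real (f i l y)) * ennreal (norm (y - x i l) powr p)))"
    by (rule glued_cost_le_double[OF p lam lam_sum r])
  also have "\<dots> = 2 * (\<Sum>i<N. ennreal (lam i) * point_cost i y)"
    by (simp add: point_cost_enn2real[OF elim])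
  finally show ?case .
qed

lemma Psi_le_inverse_weight:
  assumes "j < N"
  shows "Psi p N lam mu (mu j) \<le> ennreal (1 / lam j) * (\<integral>\<^sup>+ y. (\<Sum>i<N. ennreal (lam i) * point_cost i y) \<partial>\<nu>)"
proof -
  have "wass_pp p (mu j) (mu j) = 0"
    using assms by (simp add: mu wass_pp_discrete_distr_self sum_w_ennreal)
  then have "Psi p N lam mu (mu j) = (\<Sum>i\<in>{..<N} - {j}. ennreal (lam i) * wass_pp p (mu j) (mu i))"
    unfolding Psi_def using assms by (simp add: sum.remove)
  also have "\<dots> \<le> (\<Sum>i\<in>{..<N} - {j}. ennreal (lam i) * integral\<^sup>N \<nu> (glued_cost j i))"
    using assms by (intro sum_mono mult_left_mono wass_pp_le_glued_cost) auto
  also have "\<dots> = (\<integral>\<^sup>+ y. (\<Sum>i\<in>{..<N} - {j}. ennreal (lam i) * glued_cost j i y) \<partial>\<nu>)"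
    using assms by (subst nn_integral_sum) (auto simp: nn_integral_cmult)
  also have "\<dots> \<le> (\<integral>\<^sup>+ y. ennreal (1 / lam j) * (\<Sum>i<N. ennreal (lam i) * point_cost i y) \<partial>\<nu>)"
    by (rule nn_integral_mono_AE[OF AE_glued_cost_le_inverse_weight[OF assms]])
  also have "\<dots> = ennreal (1 / lam j) * (\<integral>\<^sup>+ y. (\<Sum>i<N. ennreal (lam i) * point_cost i y) \<partial>\<nu>)"
    by (simp add: nn_integral_cmult)
  finally show ?thesis .
qed

lemma weighted_glued_cost_le:
  "(\<Sum>j<N. ennreal (lam j) * (\<Sum>i<N. ennreal (lam i) * integral\<^sup>N \<nu> (glued_cost j i)))
    \<le> 2 * (\<integral>\<^sup>+ y. (\<Sum>i<N. ennreal (lam i) * point_cost i y) \<partial>\<nu>)"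
proof -
  have "(\<Sum>i<N. ennreal (lam i) * integral\<^sup>N \<nu> (glued_cost j i))
      = (\<integral>\<^sup>+ y. (\<Sum>i<N. ennreal (lam i) * glued_cost j i y) \<partial>\<nu>)" if "j < N" for j
    using that by (subst nn_integral_sum) (auto simp: nn_integral_cmult)
  then have "(\<Sum>j<N. ennreal (lam j) * (\<Sum>i<N. ennreal (lam i) * integral\<^sup>N \<nu> (glued_cost j i)))
      = (\<integral>\<^sup>+ y. (\<Sum>j<N. ennreal (lam j) * (\<Sum>i<N. ennreal (lam i) * glued_cost j i y)) \<partial>\<nu>)"
    by (subst nn_integral_sum) (auto simp: nn_integral_cmult)
  also have "\<dots> \<le> (\<integral>\<^sup>+ y. 2 * (\<Sum>i<N. ennreal (lam i) * point_cost i y) \<partial>\<nu>)"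
    by (rule nn_integral_mono_AE[OF AE_glued_cost_le_double])
  also have "\<dots> = 2 * (\<integral>\<^sup>+ y. (\<Sum>i<N. ennreal (lam i) * point_cost i y) \<partial>\<nu>)"
    by (simp add: nn_integral_cmult)
  finally show ?thesis .
qed

lemma sum_Psi_le:
  "(\<Sum>j<N. ennreal (lam j) * Psi p N lam mu (mu j))
    \<le> 2 * (\<integral>\<^sup>+ y. (\<Sum>i<N. ennreal (lam i) * point_cost i y) \<partial>\<nu>)"
proof -
  have "(\<Sum>j<N. ennreal (lam j) * Psi p N lam mu (mu j))
      \<le> (\<Sum>j<N. ennreal (lam j) * (\<Sum>i<N. ennreal (lam i) * integral\<^sup>N \<nu> (glued_cost j i)))"
    unfolding Psi_def by (intro sum_mono mult_left_mono wass_pp_le_glued_cost) auto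
  then show ?thesis
    using weighted_glued_cost_le by (rule order_trans)
qed

lemma Psi_mixture_le:
  "Psi p N lam mu (mixture N lam mu) \<le> 2 * (\<integral>\<^sup>+ y. (\<Sum>i<N. ennreal (lam i) * point_cost i y) \<partial>\<nu>)"
proof -
  have "Psi p N lam mu (mixture N lam mu)
      \<le> (\<Sum>i<N. ennreal (lam i) * (\<Sum>j<N. ennreal (lam j) * integral\<^sup>N \<nu> (glued_cost j i)))"
    unfolding Psi_def by (intro sum_mono mult_left_mono wass_pp_mixture_le_glued_cost) auto
  also have "\<dots> = (\<Sum>j<N. ennreal (lam j) * (\<Sum>i<N. ennreal (lam i) * integral\<^sup>N \<nu> (glued_cost j i)))"
    unfolding sum_distrib_left by (subst sum.swap) (simp add: ac_simps)
  finally show ?thesis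
    using weighted_glued_cost_le by (rule order_trans)
qed

end

context discrete_barycenter_problem
begin

lemma transition_weights_of_coupling:
  assumes "i < N" "\<gamma> \<in> couplings \<nu> (mu i)"
  obtains F where "transition_weights \<nu> (n i) (\<lambda>l. ennreal (w i l)) F"
    and "(\<integral>\<^sup>+ z. ennreal (norm (fst z - snd z) powr p) \<partial>\<gamma>)
      = (\<integral>\<^sup>+ y. (\<Sum>l<n i. F l y * ennreal (norm (y - x i l) powr p)) \<partial>\<nu>)"
proof -
  have "\<gamma> \<in> couplings \<nu> (discrete_distr {..<n i} (\<lambda>l. ennreal (w i l)) (x i))" "inj_on (x i) {..<n i}"
    using assms mu x_inj by auto
  then obtain F where F: "transition_weights \<nu> (n i) (\<lambda>l. ennreal (w i l)) F"
    and disintegration: "\<And>c. c \<in> borel_measurable borel \<Longrightarrow>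
      (\<integral>\<^sup>+ z. c z \<partial>\<gamma>) = (\<Sum>l<n i. \<integral>\<^sup>+ y. F l y * c (y, x i l) \<partial>\<nu>)"
    by (rule coupling_transition_weights[OF prob_space_\<nu> sets_\<nu>]) blast
  have [measurable]: "F l \<in> borel_measurable \<nu>" for l
    using F by (simp add: transition_weights_def)
  have "(\<integral>\<^sup>+ z. ennreal (norm (fst z - snd z) powr p) \<partial>\<gamma>)
      = (\<Sum>l<n i. \<integral>\<^sup>+ y. F l y * ennreal (norm (y - x i l) powr p) \<partial>\<nu>)"
    using disintegration[OF borel_measurable_transport_cost] by simp
  also have "\<dots> = (\<integral>\<^sup>+ y. (\<Sum>l<n i. F l y * ennreal (norm (y - x i l) powr p)) \<partial>\<nu>)"
    by (intro nn_integral_sum[symmetric]) measurable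
  finally show ?thesis
    using F that by blast
qed

lemma Psi_bounds_couplings:
  assumes \<pi>: "\<forall>i<N. \<pi> i \<in> couplings \<nu> (mu i)"
  defines "C \<equiv> (\<Sum>i<N. ennreal (lam i) * (\<integral>\<^sup>+ z. ennreal (norm (fst z - snd z) powr p) \<partial>\<pi> i))"
  shows "\<forall>j<N. Psi p N lam mu (mu j) \<le> ennreal (1 / lam j) * C"
    and "(\<Sum>j<N. ennreal (lam j) * Psi p N lam mu (mu j)) \<le> 2 * C"
    and "Psi p N lam mu (mixture N lam mu) \<le> 2 * C"
proof -
  let ?P = "\<lambda>i F. transition_weights \<nu> (n i) (\<lambda>l. ennreal (w i l)) F \<and>
    (\<integral>\<^sup>+ z. ennreal (norm (fst z - snd z) powr p) \<partial>\<pi> i)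
      = (\<integral>\<^sup>+ y. (\<Sum>l<n i. F l y * ennreal (norm (y - x i l) powr p)) \<partial>\<nu>)"
  have "\<forall>i\<in>{..<N}. \<exists>F. ?P i F"
  proof
    fix i assume "i \<in> {..<N}"
    then have "i < N" by simp
    moreover from this \<pi> have "\<pi> i \<in> couplings \<nu> (mu i)" by simp
    ultimately obtain F where "transition_weights \<nu> (n i) (\<lambda>l. ennreal (w i l)) F"
      and "(\<integral>\<^sup>+ z. ennreal (norm (fst z - snd z) powr p) \<partial>\<pi> i)
        = (\<integral>\<^sup>+ y. (\<Sum>l<n i. F l y * ennreal (norm (y - x i l) powr p)) \<partial>\<nu>)"
      by (rule transition_weights_of_coupling)
    then show "\<exists>F. ?P i F" by blast
  qed
  from bchoice[OF this] obtain f where "\<forall>i\<in>{..<N}. ?P i (f i)" ..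
  then have f: "\<forall>i<N. transition_weights \<nu> (n i) (\<lambda>l. ennreal (w i l)) (f i)"
    and cost: "\<And>i. i < N \<Longrightarrow> (\<integral>\<^sup>+ z. ennreal (norm (fst z - snd z) powr p) \<partial>\<pi> i)
      = (\<integral>\<^sup>+ y. (\<Sum>l<n i. f i l y * ennreal (norm (y - x i l) powr p)) \<partial>\<nu>)"
    by auto
  interpret glued_marginals p N lam n w x mu \<nu> f
    by unfold_locales (rule f)
  have "C = (\<Sum>i<N. ennreal (lam i) * integral\<^sup>N \<nu> (point_cost i))"
    unfolding C_def point_cost_def by (simp add: cost)
  also have "\<dots> = (\<integral>\<^sup>+ y. (\<Sum>i<N. ennreal (lam i) * point_cost i y) \<partial>\<nu>)"
    by (subst nn_integral_sum) (auto simp: nn_integral_cmult)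
  finally show "\<forall>j<N. Psi p N lam mu (mu j) \<le> ennreal (1 / lam j) * C"
    and "(\<Sum>j<N. ennreal (lam j) * Psi p N lam mu (mu j)) \<le> 2 * C"
    and "Psi p N lam mu (mixture N lam mu) \<le> 2 * C"
    using Psi_le_inverse_weight sum_Psi_le Psi_mixture_le by auto
qed

lemma Psi_bounds:
  shows "\<forall>j<N. Psi p N lam mu (mu j) \<le> ennreal (1 / lam j) * Psi p N lam mu \<nu>"
    and "(\<Sum>j<N. ennreal (lam j) * Psi p N lam mu (mu j)) \<le> 2 * Psi p N lam mu \<nu>"
    and "Psi p N lam mu (mixture N lam mu) \<le> 2 * Psi p N lam mu \<nu>"
proof -
  have \<Psi>: "Psi p N lam mu \<nu> = (\<Sum>i<N. ennreal (lam i) *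
      (INF \<gamma>\<in>couplings \<nu> (mu i). \<integral>\<^sup>+ z. ennreal (norm (fst z - snd z) powr p) \<partial>\<gamma>))"
    by (simp add: Psi_def wass_pp_def)
  show "\<forall>j<N. Psi p N lam mu (mu j) \<le> ennreal (1 / lam j) * Psi p N lam mu \<nu>"
    unfolding \<Psi> using lam_pos Psi_bounds_couplings(1)
    by (intro allI impI le_mult_sum_INF_ennreal) auto
  have "(\<Sum>j<N. ennreal (lam j) * Psi p N lam mu (mu j)) \<le> ennreal 2 * Psi p N lam mu \<nu>"
    unfolding \<Psi> using lam_pos Psi_bounds_couplings(2)
    by (intro le_mult_sum_INF_ennreal) auto
  moreover have "Psi p N lam mu (mixture N lam mu) \<le> ennreal 2 * Psi p N lam mu \<nu>"
    unfolding \<Psi> using lam_pos Psi_bounds_couplings(3)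
    by (intro le_mult_sum_INF_ennreal) auto
  ultimately show "(\<Sum>j<N. ennreal (lam j) * Psi p N lam mu (mu j)) \<le> 2 * Psi p N lam mu \<nu>"
    and "Psi p N lam mu (mixture N lam mu) \<le> 2 * Psi p N lam mu \<nu>"
    by simp_all
qed

end

lemma inverse_max_weight_le_card:
  assumes "(\<Sum>i<N. lam i) = (1::real)" "j < N" "0 < lam j" "lam j = (MAX i\<in>{..<N}. lam i)"
  shows "1 / lam j \<le> real N"
proof -
  have "1 = (\<Sum>i<N. lam i)"
    using assms(1) by simp
  also have "\<dots> \<le> (\<Sum>i<N. lam j)"
    using assms(4) by (intro sum_mono) (auto intro!: Max_ge)
  finally show ?thesis
    using assms(3) by (simp add: divide_le_eq)
qed

lemma nn_integral_pmf_lessThan: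
  fixes P :: "nat pmf" and F :: "nat \<Rightarrow> ennreal"
  assumes "\<forall>i<N. pmf P i = lam i" "(\<Sum>i<N. lam i) = 1"
  shows "(\<integral>\<^sup>+ i. F i \<partial>measure_pmf P) = (\<Sum>i<N. ennreal (lam i) * F i)"
proof -
  have "measure (measure_pmf P) {..<N} = (\<Sum>i<N. pmf P i)"
    by (rule measure_measure_pmf_finite) simp
  also have "\<dots> = 1"
    using assms by simp
  finally
  have "AE i in measure_pmf P. i \<in> {..<N}"
    by (simp add: measure_pmf.prob_eq_1)
  then have "set_pmf P \<subseteq> {..<N}"
    by (auto simp: AE_measure_pmf_iff)
  then have "(\<integral>\<^sup>+ i. F i \<partial>measure_pmf P) = (\<Sum>i<N. F i * pmf P i)"
    by (intro nn_integral_measure_pmf_support) auto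
  then show ?thesis
    using assms(1) by (simp add: mult.commute)
qed

theorem proposition4p3:
  fixes p :: real and N :: nat and lam :: "nat \<Rightarrow> real"
    and n :: "nat \<Rightarrow> nat" and w :: "nat \<Rightarrow> nat \<Rightarrow> real"
    and x :: "nat \<Rightarrow> nat \<Rightarrow> 'a::euclidean_space"
    and mu :: "nat \<Rightarrow> 'a measure" and nuhat :: "'a measure" and P :: "nat pmf"
  assumes p: "p = 1 \<or> p = 2"
    and N: "N \<ge> 2"
    and lam_pos: "\<forall>i<N. 0 < lam i \<and> lam i < 1"
    and lam_sum: "(\<Sum>i<N. lam i) = 1"
    and w_pos: "\<forall>i<N. \<forall>l<n i. 0 < w i l"
    and w_sum: "\<forall>i<N. (\<Sum>l<n i. w i l) = 1"
    and x_inj: "\<forall>i<N. inj_on (x i) {..<n i}"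
    and mu_def: "\<forall>i<N. mu i = discrete_measure (n i) (w i) (x i)"
    and nuhat_prob: "borel_prob nuhat"
    and nuhat_opt: "\<forall>\<nu>. borel_prob \<nu> \<longrightarrow> Psi p N lam mu nuhat \<le> Psi p N lam mu \<nu>"
    and P_def: "\<forall>i<N. pmf P i = lam i"
  shows "(\<forall>j<N. Psi p N lam mu (mu j) \<le> ennreal (1 / lam j) * Psi p N lam mu nuhat
            \<and> (lam j = (MAX i\<in>{..<N}. lam i)
                 \<longrightarrow> Psi p N lam mu (mu j) \<le> of_nat N * Psi p N lam mu nuhat))
       \<and> Psi p N lam mu (mixture N lam mu) \<le> 2 * Psi p N lam mu nuhat
       \<and> (\<integral>\<^sup>+ i. Psi p N lam mu (mu i) \<partial>(measure_pmf P)) \<le> 2 * Psi p N lam mu nuhat"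
proof -
  have "\<forall>i<N. 0 < lam i" "\<forall>i<N. \<forall>l<n i. 0 \<le> w i l"
    using lam_pos w_pos by (auto intro: less_imp_le)
  moreover have "\<forall>i<N. mu i = discrete_distr {..<n i} (\<lambda>l. ennreal (w i l)) (x i)"
    using mu_def by (simp add: discrete_measure_eq_discrete_distr)
  moreover have "prob_space nuhat" "sets nuhat = sets borel"
    using nuhat_prob by (simp_all add: borel_prob_def)
  ultimately interpret discrete_barycenter_problem p N lam n w x mu nuhat
    using p lam_sum w_sum x_inj by (intro discrete_barycenter_problem.intro) simp_all
  have "Psi p N lam mu (mu j) \<le> of_nat N * Psi p N lam mu nuhat"
    if "j < N" "lam j = (MAX i\<in>{..<N}. lam i)" for j
  proof -
    have "ennreal (1 / lam j) \<le> of_nat N"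
      using inverse_max_weight_le_card[OF lam_sum that(1) _ that(2)] lam_pos that(1)
      by (simp add: ennreal_of_nat_eq_real_of_nat ennreal_leI)
    with Psi_bounds(1) that(1) show ?thesis
      by (meson mult_right_mono order_trans zero_le)
  qed
  then show ?thesis
    using Psi_bounds nn_integral_pmf_lessThan[OF P_def lam_sum] by simp
qed

end
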